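(* Let $P=\sum_{k=0}^nq^kP_k(D)\in\mathbb{C}[q][D]$ with $D=q\frac{d}{dq}$, and let $\widetilde P=\sum_{k=0}^nq^kP_k(D)(D+1)(D+2)\cdots(D+k)$. Fix $N\geq0$ and let $R=\mathbb{C}[\varepsilon]/(\varepsilon^{N+1})$. If $I=\sum_{i,j}a_{ij}q^i\varepsilon^j\in\mathbb{C}[[q]]\otimes R$ is a perturbed solution of $P$, then $$\widetilde I=\sum_{i,j}a_{ij}q^i\varepsilon^j(\varepsilon+1)(\varepsilon+2)\cdots(\varepsilon+i)$$ is a perturbed solution of $\widetilde P$.
   Context: Write a series $J\in\mathbb{C}[[q]]\otimes R$ as $J=\sum_{j=0}^NJ^j(q)\varepsilon^j$ and put $J_r=\sum_{m=0}^rJ^{r-m}(q)\,t^m/m!\in\mathbb{C}[[q]][t]$. Operators act on $\mathbb{C}[[q]][t]$ via $D(f(q)t^m)=qf'(q)t^m+mf(q)t^{m-1}$, with $q$ acting by multiplication. $J$ is a perturbed solution of an operator $Q$ if $QJ_r=0$ for all $0\leq r\leq N$. *)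

theory Defs
  imports "HOL-Computational_Algebra.Computational_Algebra"
begin

text \<open>Elements of C[[q]][t] are modelled as complex fps poly (polynomials in t with
  coefficients power series in q).  The operator D acts by
  D(f t^m) = q f'(q) t^m + m f t^(m-1).\<close>

definition Dop :: "complex fps poly \<Rightarrow> complex fps poly" where
  "Dop p = map_poly (\<lambda>f. fps_X * fps_deriv f) p + pderiv p"

definition polyD :: "complex poly \<Rightarrow> complex fps poly \<Rightarrow> complex fps poly" where
  "polyD p g = (\<Sum>l\<le>degree p. smult (fps_const (coeff p l)) ((Dop ^^ l) g))"

definition applyOp :: "nat \<Rightarrow> (nat \<Rightarrow> complex poly) \<Rightarrow> complex fps poly \<Rightarrow> complex fps poly" where
  "applyOp n Ps g = (\<Sum>k\<le>n. smult (fps_X ^ k) (polyD (Ps k) g))"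

text \<open>A series J in C[[q]] tensor C[eps]/(eps^(N+1)) is given by its components J j = J^j(q),
  j = 0..N.  J_r = sum_{m=0}^r J^{r-m}(q) t^m / m!.\<close>
definition Jr :: "(nat \<Rightarrow> complex fps) \<Rightarrow> nat \<Rightarrow> complex fps poly" where
  "Jr J r = (\<Sum>m\<le>r. monom (fps_const (1 / fact m) * J (r - m)) m)"

definition perturbed_solution :: "nat \<Rightarrow> nat \<Rightarrow> (nat \<Rightarrow> complex poly) \<Rightarrow> (nat \<Rightarrow> complex fps) \<Rightarrow> bool" where
  "perturbed_solution N n Ps J \<longleftrightarrow> (\<forall>r\<le>N. applyOp n Ps (Jr J r) = 0)"

definition rising :: "nat \<Rightarrow> complex poly" where
  "rising k = (\<Prod>l\<in>{1..k}. [:of_nat l, 1:])"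

definition Ptilde :: "(nat \<Rightarrow> complex poly) \<Rightarrow> nat \<Rightarrow> complex poly" where
  "Ptilde Ps k = Ps k * rising k"

text \<open>I-tilde: the eps^j-component of sum a_ij q^i eps^j (eps+1)...(eps+i) in R,
  where a_ij = fps_nth (I j) i.\<close>
definition Itilde :: "(nat \<Rightarrow> complex fps) \<Rightarrow> nat \<Rightarrow> complex fps" where
  "Itilde I j = Abs_fps (\<lambda>i. \<Sum>j'\<le>j. fps_nth (I j') i * coeff (rising i) (j - j'))"

end

theory Submission
  imports Defs
begin

text \<open>
  A series \<open>J\<close> with \<open>\<epsilon>\<close>-components \<open>J\<^sup>j\<close> is encoded by the sequence \<open>J_r\<close>
  in such a way that the operator \<open>D\<close> on \<open>J_r\<close> becomes \<open>D + \<epsilon>\<close> on \<open>J\<close>; hence \<open>J\<close> is a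
  perturbed solution of \<open>P\<close> iff \<open>P(D + \<epsilon>) J = 0\<close> in \<open>\<complex>[[q]] \<otimes> R\<close>.
  On the coefficient \<open>a\<^sub>i(\<epsilon>)\<close> of \<open>q\<^sup>i\<close> the operator \<open>D + \<epsilon>\<close> is multiplication by \<open>i + \<epsilon>\<close>,
  so the \<open>q\<^sup>m\<close>-coefficient of \<open>P(D + \<epsilon>) J\<close> is \<open>\<Sum>\<^sub>k P\<^sub>k(m - k + \<epsilon>) a\<^sub>m\<^sub>-\<^sub>k(\<epsilon>)\<close>.
  Passing to \<open>\<widetilde>P\<close> and \<open>\<widetilde>I\<close> multiplies the \<open>k\<close>-th summand by
  \<open>(m-k+1+\<epsilon>)\<cdots>(m+\<epsilon>) \<cdot> (1+\<epsilon>)\<cdots>(m-k+\<epsilon>) = (1+\<epsilon>)\<cdots>(m+\<epsilon>)\<close>, independently of \<open>k\<close>.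
  Thus the \<open>q\<^sup>m\<close>-coefficient of \<open>\<widetilde>P(D + \<epsilon>) \<widetilde>I\<close> is that of \<open>P(D + \<epsilon>) I\<close> times a
  polynomial in \<open>\<epsilon>\<close>, which vanishes modulo \<open>\<epsilon>\<^sup>N\<^sup>+\<^sup>1\<close> whenever the latter does.
\<close>

lemma of_nat_Suc_div_fact_Suc:
  "of_nat (Suc m) * (1 / fact (Suc m)) = (1 / fact m :: 'a :: field_char_0)"
  by (simp add: field_simps del: of_nat_Suc)

lemma fps_of_poly_pcompose_eq_sum:
  fixes p q :: "'a :: comm_ring_1 poly"
  shows "fps_of_poly (pcompose p q) = (\<Sum>l\<le>degree p. fps_const (coeff p l) * fps_of_poly q ^ l)"
proof -
  have "degree (map_poly (\<lambda>x. [:x:]) p) = degree p"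
    by (rule degree_map_poly) simp
  then have "pcompose p q = (\<Sum>l\<le>degree p. smult (coeff p l) (q ^ l))"
    by (simp add: pcompose_altdef poly_altdef coeff_map_poly)
  then show ?thesis
    by (simp add: fps_of_poly_sum fps_of_poly_smult fps_of_poly_power)
qed

lemma fps_mult_nth_eq_0:
  fixes f g :: "'a :: semiring_0 fps"
  assumes "\<And>i. i \<le> j \<Longrightarrow> g $ i = 0"
  shows "(f * g) $ j = 0"
  using assms by (simp add: fps_mult_nth)

lemma coeff_Jr: "coeff (Jr J r) m = (if m \<le> r then fps_const (1 / fact m) * J (r - m) else 0)"
  unfolding Jr_def by (simp add: coeff_sum coeff_monom)

lemma Jr_eq_0_iff: "Jr J r = 0 \<longleftrightarrow> (\<forall>j\<le>r. J j = 0)"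
proof
  assume Jr_0: "Jr J r = 0"
  show "\<forall>j\<le>r. J j = 0"
  proof (intro allI impI)
    fix j
    assume "j \<le> r"
    then have "coeff (Jr J r) (r - j) = fps_const (1 / fact (r - j)) * J j"
      by (simp add: coeff_Jr)
    with Jr_0 show "J j = 0"
      by simp
  qed
qed (auto intro!: poly_eqI simp: coeff_Jr)

lemma Jr_smult: "smult c (Jr J r) = Jr (\<lambda>j. c * J j) r"
  by (rule poly_eqI) (simp add: coeff_Jr algebra_simps)

lemma Jr_sum: "finite S \<Longrightarrow> (\<Sum>x\<in>S. Jr (F x) r) = Jr (\<lambda>j. \<Sum>x\<in>S. F x j) r"
  by (rule poly_eqI) (simp add: coeff_Jr coeff_sum sum_distrib_left)

definition Dop_eps :: "(nat \<Rightarrow> complex fps) \<Rightarrow> nat \<Rightarrow> complex fps" where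
  "Dop_eps J j = fps_X * fps_deriv (J j) + (if j = 0 then 0 else J (j - 1))"

lemma coeff_Dop:
  "coeff (Dop p) m = fps_X * fps_deriv (coeff p m) + of_nat (Suc m) * coeff p (Suc m)"
  unfolding Dop_def by (simp add: coeff_map_poly coeff_pderiv)

lemma Dop_Jr: "Dop (Jr J r) = Jr (Dop_eps J) r"
proof (rule poly_eqI)
  fix m
  have fact_step:
    "of_nat (Suc m) * fps_const (1 / fact (Suc m)) = (fps_const (1 / fact m) :: complex fps)"
    by (simp only: fps_of_nat[symmetric] fps_const_mult of_nat_Suc_div_fact_Suc)
  show "coeff (Dop (Jr J r)) m = coeff (Jr (Dop_eps J) r) m"
  proof (cases "m < r")
    case True
    then have "r - m = Suc (r - Suc m)" by simp
    then show ?thesis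
      using True
      by (simp add: coeff_Dop coeff_Jr Dop_eps_def fact_step algebra_simps del: fact_Suc of_nat_Suc)
  qed (auto simp: coeff_Dop coeff_Jr Dop_eps_def)
qed

lemma funpow_Dop_Jr: "(Dop ^^ l) (Jr J r) = Jr ((Dop_eps ^^ l) J) r"
  by (induction l) (simp_all add: Dop_Jr)

definition applyOp_eps ::
    "nat \<Rightarrow> (nat \<Rightarrow> complex poly) \<Rightarrow> (nat \<Rightarrow> complex fps) \<Rightarrow> nat \<Rightarrow> complex fps" where
  "applyOp_eps n Ps J j =
    (\<Sum>k\<le>n. fps_X ^ k * (\<Sum>l\<le>degree (Ps k). fps_const (coeff (Ps k) l) * (Dop_eps ^^ l) J j))"

lemma applyOp_Jr: "applyOp n Ps (Jr J r) = Jr (applyOp_eps n Ps J) r"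
  unfolding applyOp_def polyD_def applyOp_eps_def funpow_Dop_Jr
  by (simp add: Jr_smult Jr_sum sum_distrib_left)

lemma perturbed_solution_iff:
  "perturbed_solution N n Ps J \<longleftrightarrow> (\<forall>j\<le>N. applyOp_eps n Ps J j = 0)"
  unfolding perturbed_solution_def applyOp_Jr Jr_eq_0_iff by auto

definition qcoeff :: "(nat \<Rightarrow> 'a fps) \<Rightarrow> nat \<Rightarrow> 'a fps" where
  "qcoeff J i = Abs_fps (\<lambda>j. J j $ i)"

lemma qcoeff_nth [simp]: "qcoeff J i $ j = J j $ i"
  by (simp add: qcoeff_def)

lemma qcoeff_Dop_eps: "qcoeff (Dop_eps J) i = (of_nat i + fps_X) * qcoeff J i"
  by (rule fps_ext) (cases i, auto simp: Dop_eps_def distrib_right)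

lemma qcoeff_funpow_Dop_eps:
  "qcoeff ((Dop_eps ^^ l) J) i = (of_nat i + fps_X) ^ l * qcoeff J i"
  by (induction l) (simp_all add: qcoeff_Dop_eps)

lemma funpow_Dop_eps_nth:
  "(Dop_eps ^^ l) J j $ i = ((of_nat i + fps_X) ^ l * qcoeff J i) $ j"
  by (metis qcoeff_funpow_Dop_eps qcoeff_nth)

lemma qcoeff_applyOp_eps:
  "qcoeff (applyOp_eps n Ps J) m =
    (\<Sum>k\<le>n. if k \<le> m
      then fps_of_poly (pcompose (Ps k) [:of_nat (m - k), 1:]) * qcoeff J (m - k) else 0)"
proof (rule fps_ext)
  fix j
  have "qcoeff (applyOp_eps n Ps J) m $ j =
      (\<Sum>k\<le>n. if k \<le> m then (\<Sum>l\<le>degree (Ps k). fps_const (coeff (Ps k) l)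
         * (of_nat (m - k) + fps_X) ^ l * qcoeff J (m - k)) $ j else 0)"
    unfolding qcoeff_nth applyOp_eps_def
    by (auto simp: fps_sum_nth fps_X_power_mult_nth funpow_Dop_eps_nth mult.assoc intro!: sum.cong)
  also have "\<dots> = (\<Sum>k\<le>n. if k \<le> m
      then fps_of_poly (pcompose (Ps k) [:of_nat (m - k), 1:]) * qcoeff J (m - k) else 0) $ j"
    unfolding fps_sum_nth
    by (intro sum.cong refl) (simp add: fps_of_poly_pcompose_eq_sum fps_of_poly_pCons fps_of_nat
        sum_distrib_right fps_sum_nth del: of_nat_diff)
  finally show "qcoeff (applyOp_eps n Ps J) m $ j = \<dots>" .
qed

lemma pcompose_rising_mult_rising:
  "pcompose (rising k) [:of_nat i, 1:] * rising i = rising (i + k)"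
proof -
  have "pcompose (rising k) [:of_nat i, 1:] = (\<Prod>l\<in>{1..k}. [:of_nat (l + i), 1:])"
    unfolding rising_def pcompose_prod by (simp add: pcompose_pCons algebra_simps)
  also have "\<dots> = (\<Prod>l\<in>{i+1..i+k}. [:of_nat l, 1:])"
    using prod.shift_bounds_cl_nat_ivl[of "\<lambda>l. [:of_nat l, 1:] :: complex poly" 1 i k]
    by (simp add: add.commute)
  finally have "pcompose (rising k) [:of_nat i, 1:] * rising i
      = (\<Prod>l\<in>{i+1..i+k}. [:of_nat l, 1:]) * (\<Prod>l\<in>{1..i}. [:of_nat l, 1:])"
    by (simp add: rising_def)
  also have "\<dots> = (\<Prod>l\<in>{i+1..i+k} \<union> {1..i}. [:of_nat l, 1:])"
    by (rule prod.union_disjoint[symmetric]) auto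
  also have "{i+1..i+k} \<union> {1..i} = {1..i+k}" by auto
  finally show ?thesis by (simp add: rising_def)
qed

lemma qcoeff_Itilde: "qcoeff (Itilde I) i = qcoeff I i * fps_of_poly (rising i)"
  by (rule fps_ext) (simp add: Itilde_def fps_mult_nth atLeast0AtMost)

lemma qcoeff_applyOp_eps_tilde:
  "qcoeff (applyOp_eps n (Ptilde Ps) (Itilde I)) m
    = fps_of_poly (rising m) * qcoeff (applyOp_eps n Ps I) m"
  unfolding qcoeff_applyOp_eps sum_distrib_left
proof (rule sum.cong)
  fix k
  let ?shift = "\<lambda>p. fps_of_poly (pcompose p [:of_nat (m - k), 1:])"
  assume "k \<in> {..n}"
  show "(if k \<le> m then ?shift (Ptilde Ps k) * qcoeff (Itilde I) (m - k) else 0) =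
        fps_of_poly (rising m) * (if k \<le> m then ?shift (Ps k) * qcoeff I (m - k) else 0)"
  proof (cases "k \<le> m")
    case True
    have "?shift (Ptilde Ps k) * qcoeff (Itilde I) (m - k)
        = ?shift (Ps k) * qcoeff I (m - k) * (?shift (rising k) * fps_of_poly (rising (m - k)))"
      by (simp add: Ptilde_def qcoeff_Itilde pcompose_mult fps_of_poly_mult algebra_simps)
    also have "?shift (rising k) * fps_of_poly (rising (m - k)) = fps_of_poly (rising m)"
      using True pcompose_rising_mult_rising[of k "m - k"]
      by (simp only: le_add_diff_inverse2 flip: fps_of_poly_mult)
    finally show ?thesis
      using True by (simp add: algebra_simps)
  qed simp
qed simp

theorem corollary2p2p5:
  fixes N n :: nat and Ps :: "nat \<Rightarrow> complex poly" and I :: "nat \<Rightarrow> complex fps"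
  assumes "perturbed_solution N n Ps I"
  shows "perturbed_solution N n (Ptilde Ps) (Itilde I)"
proof -
  have vanish: "applyOp_eps n Ps I j = 0" if "j \<le> N" for j
    using assms that by (simp add: perturbed_solution_iff)
  have "applyOp_eps n (Ptilde Ps) (Itilde I) j $ m = 0" if "j \<le> N" for j m
  proof -
    have "applyOp_eps n (Ptilde Ps) (Itilde I) j $ m
        = (fps_of_poly (rising m) * qcoeff (applyOp_eps n Ps I) m) $ j"
      by (simp flip: qcoeff_applyOp_eps_tilde)
    also have "\<dots> = 0"
      using vanish that by (intro fps_mult_nth_eq_0) simp
    finally show ?thesis .
  qed
  then show ?thesis
    by (simp add: perturbed_solution_iff fps_eq_iff)
qed

end
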